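(* Let $T$ be an ergodic measure-preserving transformation of a Lebesgue probability space $(X,\mathcal B,\mu)$ and let $g\in L^1(X,\mu)$. Then for $\mu$-a.e. $x\in X$ the following holds. Suppose $(l_n)_{n\ge1}$ is a sequence of positive integers with $l_n\to\infty$, $R^g_{x,l_n}>0$ for all $n$, and suppose the functions $\varphi^g_{x,l_n}$ converge uniformly on $[0,1]$ to a continuous function $\varphi$. Then the sequence $(R^g_{x,l_n})_{n\ge1}$ is unbounded.
   Context: For $x\in X$ and an integer $j\ge0$ put $S^g_x(j)=\sum_{k=0}^{j-1}g(T^kx)$ (so $S^g_x(0)=0$), and let $F^g_x:[0,\infty)\to\mathbb R$ be the function that agrees with $S^g_x$ at nonnegative integers and is linear on each interval $[j,j+1]$. For a positive integer $l$ put $R^g_{x,l}=\max_{t\in[0,1]}\big|F^g_x(tl)-tF^g_x(l)\big|$ and, when $R^g_{x,l}>0$, $\varphi^g_{x,l}(t)=\big(F^g_x(tl)-tF^g_x(l)\big)/R^g_{x,l}$, $t\in[0,1]$. If $\varphi^g_{x,l_n}\to\varphi$ uniformly for some sequence $l_n$, the graph of $\varphi$ is called a limiting curve, $(l_n)$ a stabilizing sequence and $(R^g_{x,l_n})$ the normalizing sequence. *)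

theory Defs
  imports "HOL-Probability.Probability"
begin

definition mp_map :: "'a measure \<Rightarrow> ('a \<Rightarrow> 'a) \<Rightarrow> bool" where
  "mp_map M T \<longleftrightarrow> T \<in> M \<rightarrow>\<^sub>M M \<and> distr M M T = M"

definition ergodic_mp :: "'a measure \<Rightarrow> ('a \<Rightarrow> 'a) \<Rightarrow> bool" where
  "ergodic_mp M T \<longleftrightarrow> mp_map M T \<and>
     (\<forall>A \<in> sets M. T -` A \<inter> space M = A \<longrightarrow> measure M A = 0 \<or> measure M A = 1)"

definition birk_sum :: "('a \<Rightarrow> 'a) \<Rightarrow> ('a \<Rightarrow> real) \<Rightarrow> 'a \<Rightarrow> nat \<Rightarrow> real" where
  "birk_sum T g x j = (\<Sum>k<j. g ((T ^^ k) x))"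

definition birk_F :: "('a \<Rightarrow> 'a) \<Rightarrow> ('a \<Rightarrow> real) \<Rightarrow> 'a \<Rightarrow> real \<Rightarrow> real" where
  "birk_F T g x t = birk_sum T g x (nat \<lfloor>t\<rfloor>)
      + (t - of_int \<lfloor>t\<rfloor>) * (birk_sum T g x (Suc (nat \<lfloor>t\<rfloor>)) - birk_sum T g x (nat \<lfloor>t\<rfloor>))"

text \<open>R^g_{x,l} = max_{t in [0,1]} |F(tl) - t F(l)| (the max exists by continuity).\<close>
definition birk_R :: "('a \<Rightarrow> 'a) \<Rightarrow> ('a \<Rightarrow> real) \<Rightarrow> 'a \<Rightarrow> nat \<Rightarrow> real" where
  "birk_R T g x l = (SUP t\<in>{0..1}. \<bar>birk_F T g x (t * real l) - t * birk_F T g x (real l)\<bar>)"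

text \<open>Normalized curve phi^g_{x,l}(t) (meaningful when R > 0).\<close>
definition birk_phi :: "('a \<Rightarrow> 'a) \<Rightarrow> ('a \<Rightarrow> real) \<Rightarrow> 'a \<Rightarrow> nat \<Rightarrow> real \<Rightarrow> real" where
  "birk_phi T g x l t = (birk_F T g x (t * real l) - t * birk_F T g x (real l)) / birk_R T g x l"

end

theory Submission
  imports Defs
begin

text \<open>If the normalizing sequence stayed bounded by C, the deviation \<open>F(t l_n) - t F(l_n)\<close> of the
curve from its chord would be at most C times something small for t near 0, because the limit
curve is continuous and vanishes at 0. For a fixed m and large \<open>l_n\<close>, the window [0, m]
corresponds to \<open>t \<le> m / l_n\<close>, and the deviation on [0, m] is a combination of two values of
the deviation on [0, l_n] near 0. Hence \<open>R_m\<close> would be arbitrarily small, contradicting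
\<open>R_m > 0\<close> for \<open>m = l_1\<close>.\<close>

definition chord_dev :: "(real \<Rightarrow> real) \<Rightarrow> real \<Rightarrow> real \<Rightarrow> real" where
  "chord_dev F L t = F (t * L) - t * F L"

lemma chord_dev_rescale:
  assumes "L \<noteq> 0"
  shows "chord_dev F m s = chord_dev F L (s * (m / L)) - s * chord_dev F L (m / L)"
  using assms by (simp add: chord_dev_def algebra_simps)

lemma chord_dev_rescaled_bound:
  assumes "0 < L" "0 \<le> m" "m \<le> L"
    and small: "\<And>w. w \<in> {0..m / L} \<Longrightarrow> \<bar>chord_dev F L w\<bar> \<le> \<eta>"
    and s: "s \<in> {0..1}"
  shows "\<bar>chord_dev F m s\<bar> \<le> 2 * \<eta>"
proof -
  have v: "m / L \<in> {0..m / L}" using assms by simp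
  have u: "s * (m / L) \<in> {0..m / L}"
    using assms mult_left_le_one_le[of "m / L" s] by auto
  have "\<bar>chord_dev F m s\<bar> \<le> \<bar>chord_dev F L (s * (m / L))\<bar> + \<bar>s * chord_dev F L (m / L)\<bar>"
    unfolding chord_dev_rescale[of L F m s, OF \<open>0 < L\<close>[THEN less_imp_neq, symmetric]]
    by (rule abs_triangle_ineq4)
  also have "\<dots> = \<bar>chord_dev F L (s * (m / L))\<bar> + s * \<bar>chord_dev F L (m / L)\<bar>"
    using s by (simp add: abs_mult)
  also have "\<dots> \<le> \<eta> + 1 * \<eta>"
    using small[OF u] small[OF v] s by (intro add_mono mult_mono) auto
  finally show ?thesis by simp
qed

lemma uniform_limit_small_near_base_point:
  fixes f :: "nat \<Rightarrow> 'a::metric_space \<Rightarrow> real"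
  assumes lim: "uniform_limit S f \<phi> sequentially" and cont: "continuous_on S \<phi>"
    and a: "a \<in> S" and vanish: "\<And>n. f n a = 0" and \<epsilon>: "\<epsilon> > 0"
  shows "\<exists>\<delta>>0. \<forall>\<^sub>F n in sequentially. \<forall>w\<in>S. dist w a < \<delta> \<longrightarrow> \<bar>f n w\<bar> \<le> \<epsilon>"
proof -
  have "(\<lambda>n. f n a) \<longlonglongrightarrow> \<phi> a"
    using tendsto_uniform_limitI[OF lim a] .
  hence \<phi>a: "\<phi> a = 0"
    using vanish LIMSEQ_unique[of "\<lambda>n. 0" 0 "\<phi> a"] by simp
  obtain \<delta> where "\<delta> > 0" and \<delta>: "\<And>w. w \<in> S \<Longrightarrow> dist w a < \<delta> \<Longrightarrow> \<bar>\<phi> w\<bar> < \<epsilon> / 2"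
    using cont a \<epsilon> \<phi>a unfolding continuous_on_iff
    by (metis dist_real_def diff_zero half_gt_zero)
  have "\<forall>\<^sub>F n in sequentially. \<forall>w\<in>S. dist (f n w) (\<phi> w) < \<epsilon> / 2"
    using uniform_limitD[OF lim, of "\<epsilon> / 2"] \<epsilon> by simp
  hence "\<forall>\<^sub>F n in sequentially. \<forall>w\<in>S. dist w a < \<delta> \<longrightarrow> \<bar>f n w\<bar> \<le> \<epsilon>"
  proof eventually_elim
    case (elim n)
    show ?case
    proof (intro ballI impI)
      fix w assume "w \<in> S" "dist w a < \<delta>"
      then have "\<bar>f n w - \<phi> w\<bar> < \<epsilon> / 2" "\<bar>\<phi> w\<bar> < \<epsilon> / 2"
        using elim \<delta> by (auto simp: dist_real_def)
      then show "\<bar>f n w\<bar> \<le> \<epsilon>" by linarith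
    qed
  qed
  with \<open>\<delta> > 0\<close> show ?thesis by blast
qed

lemma birk_F_0 [simp]: "birk_F T g x 0 = 0"
  by (simp add: birk_F_def birk_sum_def)

lemma birk_R_eq_SUP_chord_dev:
  "birk_R T g x l = (SUP t\<in>{0..1}. \<bar>chord_dev (birk_F T g x) (real l) t\<bar>)"
  by (simp add: birk_R_def chord_dev_def)

lemma chord_dev_eq_birk_R_mult_birk_phi:
  "0 < birk_R T g x l \<Longrightarrow>
     chord_dev (birk_F T g x) (real l) t = birk_R T g x l * birk_phi T g x l t"
  by (simp add: birk_phi_def chord_dev_def)

lemma birk_phi_0 [simp]: "birk_phi T g x l 0 = 0"
  by (simp add: birk_phi_def)

lemma birk_R_le_if_chord_dev_small:
  assumes "0 < l" "m \<le> l"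
    and small: "\<And>w. w \<in> {0..real m / real l} \<Longrightarrow> \<bar>chord_dev (birk_F T g x) (real l) w\<bar> \<le> \<eta>"
  shows "birk_R T g x m \<le> 2 * \<eta>"
  unfolding birk_R_eq_SUP_chord_dev
proof (rule cSUP_least)
  fix s :: real assume s: "s \<in> {0..1}"
  show "\<bar>chord_dev (birk_F T g x) (real m) s\<bar> \<le> 2 * \<eta>"
    by (rule chord_dev_rescaled_bound[where L = "real l", OF _ _ _ _ s]) (use assms in auto)
qed simp

lemma birk_R_unbounded:
  fixes l :: "nat \<Rightarrow> nat" and \<phi> :: "real \<Rightarrow> real"
  assumes lpos: "\<And>n. 0 < l n" and lim: "filterlim l at_top sequentially"
    and Rpos: "\<And>n. 0 < birk_R T g x (l n)"
    and cont: "continuous_on {0..1} \<phi>"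
    and conv: "uniform_limit {0..1} (\<lambda>n. birk_phi T g x (l n)) \<phi> sequentially"
  shows "\<not> bounded (range (\<lambda>n. birk_R T g x (l n)))"
proof
  assume "bounded (range (\<lambda>n. birk_R T g x (l n)))"
  then obtain C where "C > 0" and "\<And>n. \<bar>birk_R T g x (l n)\<bar> \<le> C"
    unfolding bounded_pos by auto
  hence C: "\<And>n. birk_R T g x (l n) \<le> C" by (meson abs_le_D1)
  define m where "m = l 0"
  have shrink: "birk_R T g x m \<le> 2 * (C * \<epsilon>)" if "\<epsilon> > 0" for \<epsilon>
  proof -
    obtain \<delta> where "\<delta> > 0" and near0: "\<forall>\<^sub>F n in sequentially.
        \<forall>w\<in>{0..1}. w < \<delta> \<longrightarrow> \<bar>birk_phi T g x (l n) w\<bar> \<le> \<epsilon>"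
      using uniform_limit_small_near_base_point[OF conv cont _ birk_phi_0 \<open>\<epsilon> > 0\<close>] by auto
    have "\<forall>\<^sub>F n in sequentially. nat \<lceil>real m / \<delta>\<rceil> + 1 + m \<le> l n"
      using lim by (simp add: filterlim_at_top)
    from eventually_happens'[OF _ eventually_conj[OF near0 this]]
    obtain n where small: "\<forall>w\<in>{0..1}. w < \<delta> \<longrightarrow> \<bar>birk_phi T g x (l n) w\<bar> \<le> \<epsilon>"
      and large: "nat \<lceil>real m / \<delta>\<rceil> + 1 + m \<le> l n"
      by auto
    have "real m / \<delta> < real (l n)"
      using large real_nat_ceiling_ge[of "real m / \<delta>"] by linarith
    hence window: "real m / real (l n) < \<delta>"
      using \<open>\<delta> > 0\<close> lpos[of n] by (simp add: field_simps)
    show ?thesis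
    proof (rule birk_R_le_if_chord_dev_small[OF lpos])
      show "m \<le> l n" using large by simp
      fix w assume w: "w \<in> {0..real m / real (l n)}"
      moreover have "real m / real (l n) \<le> 1"
        using \<open>m \<le> l n\<close> lpos[of n] by (simp add: divide_le_eq_1)
      ultimately have "w \<in> {0..1}" "w < \<delta>"
        using window by auto
      hence "\<bar>birk_phi T g x (l n) w\<bar> \<le> \<epsilon>" using small by blast
      have "\<bar>chord_dev (birk_F T g x) (real (l n)) w\<bar> = birk_R T g x (l n) * \<bar>birk_phi T g x (l n) w\<bar>"
        using Rpos[of n] by (simp add: chord_dev_eq_birk_R_mult_birk_phi abs_mult)
      also have "\<dots> \<le> C * \<epsilon>"
        using Rpos[of n] C[of n] \<open>\<bar>birk_phi T g x (l n) w\<bar> \<le> \<epsilon>\<close> by (intro mult_mono) auto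
      finally show "\<bar>chord_dev (birk_F T g x) (real (l n)) w\<bar> \<le> C * \<epsilon>" .
    qed
  qed
  have "birk_R T g x m \<le> 0"
  proof (rule field_le_epsilon)
    fix e :: real assume "e > 0"
    then show "birk_R T g x m \<le> 0 + e"
      using shrink[of "e / (2 * C)"] \<open>C > 0\<close> by simp
  qed
  with Rpos[of 0] show False by (simp add: m_def)
qed

theorem mainTheorem1:
  fixes M :: "'a measure" and T :: "'a \<Rightarrow> 'a" and g :: "'a \<Rightarrow> real"
  assumes "prob_space M"
    and "ergodic_mp M T"
    and "integrable M g"
  shows "AE x in M. \<forall>(l :: nat \<Rightarrow> nat) (\<phi> :: real \<Rightarrow> real).
           (\<forall>n. 0 < l n) \<and> filterlim l at_top sequentially \<and>
           (\<forall>n. 0 < birk_R T g x (l n)) \<and>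
           continuous_on {0..1} \<phi> \<and>
           uniform_limit {0..1} (\<lambda>n. birk_phi T g x (l n)) \<phi> sequentially
           \<longrightarrow> \<not> bounded (range (\<lambda>n. birk_R T g x (l n)))"
  by (intro AE_I2 allI impI, elim conjE) (rule birk_R_unbounded; simp)

end
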